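(* Let $\mathfrak d$ be a delta operator with basic sequence $(p_n(x))_{n\ge0}$, $\mathcal Z$ a grid, and for each $j\in\mathbb N$ let $(t^{(j)}_n(x))_{n\ge0}$ be the generalized Gončarov basis associated with $(\mathfrak d,\mathcal Z^{(j)})$ (so $t_n=t^{(0)}_n$ is the basis for $(\mathfrak d,\mathcal Z)$). Then for all $\xi\in\mathbb K$ and $n\in\mathbb N$, $$t_n(x+\xi)=\sum_{i=0}^n\binom ni t^{(i)}_{n-i}(\xi)\,p_i(x),\qquad\text{in particular}\qquad t_n(x)=\sum_{i=0}^n\binom ni t^{(i)}_{n-i}(0)\,p_i(x).$$
   Context: $\mathbb K$ is a field of characteristic zero; a delta operator is a linear operator $\mathfrak d$ on $\mathbb K[x]$ commuting with all shifts $E_a:f(x)\mapsto f(x+a)$ and with $\mathfrak d(x)$ a nonzero constant; its basic sequence is the unique $(p_n)$ with $\deg p_n=n$, $p_0=1$, $p_n(0)=0$ ($n\ge1$), $\mathfrak dp_n=np_{n-1}$. $\varepsilon_z$ is evaluation at $z$. A grid is a sequence $\mathcal Z=(z_i)_{i\ge0}$ in $\mathbb K$, and $\mathcal Z^{(j)}=(z_{i+j})_{i\ge0}$. The generalized Gončarov basis associated with $(\mathfrak d,\mathcal Z)$ is the unique sequence $(t_n)_{n\ge0}$ with $\deg t_n=n$ and $\varepsilon_{z_i}(\mathfrak d^{\,i}(t_n))=n!\,\delta_{i,n}$ for all $i,n$. *)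

theory Defs
  imports "HOL-Computational_Algebra.Polynomial"
begin

definition lin_op :: "('a::field poly \<Rightarrow> 'a poly) \<Rightarrow> bool" where
  "lin_op D \<longleftrightarrow> (\<forall>f g. D (f + g) = D f + D g) \<and> (\<forall>c f. D (smult c f) = smult c (D f))"

definition shift_op :: "'a::comm_semiring_1 \<Rightarrow> 'a poly \<Rightarrow> 'a poly" where
  "shift_op a f = pcompose f [:a, 1:]"

definition delta_op :: "('a::field poly \<Rightarrow> 'a poly) \<Rightarrow> bool" where
  "delta_op D \<longleftrightarrow> lin_op D \<and> (\<forall>a f. D (shift_op a f) = shift_op a (D f))
     \<and> (\<exists>c. c \<noteq> 0 \<and> D [:0, 1:] = [:c:])"

definition basic_seq :: "('a::field poly \<Rightarrow> 'a poly) \<Rightarrow> (nat \<Rightarrow> 'a poly) \<Rightarrow> bool" where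
  "basic_seq D p \<longleftrightarrow> p 0 = 1 \<and> (\<forall>n. degree (p n) = n)
     \<and> (\<forall>n\<ge>1. poly (p n) 0 = 0)
     \<and> (\<forall>n. D (p n) = smult (of_nat n) (p (n - 1)))"

definition gon_basis :: "('a::field poly \<Rightarrow> 'a poly) \<Rightarrow> (nat \<Rightarrow> 'a) \<Rightarrow> (nat \<Rightarrow> 'a poly) \<Rightarrow> bool" where
  "gon_basis D z t \<longleftrightarrow> (\<forall>n. degree (t n) = n)
     \<and> (\<forall>i n. poly ((D ^^ i) (t n)) (z i) = (if i = n then of_nat (fact n) else 0))"

end

theory Submission
  imports Defs
begin

(*
  Every polynomial g of degree at most n has the umbral Taylor expansion
  g(x + xi) = sum_{k<=n} (d^k g)(xi) / k! * p_k(x), because d commutes with shifts and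
  (d^k p_j)(0) = k! [j = k].  Applied to g = t_n it remains to compute d^i t_n: it has
  degree n - i and satisfies the Goncarov conditions of the shifted grid Z^(i) up to the
  factor n!/(n-i)!, so by uniqueness of the Goncarov basis d^i t_n = n!/(n-i)! * t^(i)_(n-i).
*)

lemma lin_op_zero: "lin_op D \<Longrightarrow> D 0 = 0"
  unfolding lin_op_def by (metis add_cancel_right_left add_0)

lemma lin_op_diff: "lin_op D \<Longrightarrow> D (f - g) = D f - D g"
  unfolding lin_op_def by (metis add_diff_cancel diff_add_cancel)

lemma lin_op_smult: "lin_op D \<Longrightarrow> D (smult c f) = smult c (D f)"
  unfolding lin_op_def by blast

lemma lin_op_sum: "lin_op D \<Longrightarrow> D (sum f A) = (\<Sum>x\<in>A. D (f x))"
  by (induction A rule: infinite_finite_induct) (simp_all add: lin_op_zero, simp add: lin_op_def)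

lemma lin_op_funpow: "lin_op D \<Longrightarrow> lin_op (D ^^ k)"
  by (induction k) (auto simp: lin_op_def)

lemma delta_op_funpow_shift:
  "delta_op D \<Longrightarrow> (D ^^ k) (pcompose f [:a, 1:]) = pcompose ((D ^^ k) f) [:a, 1:]"
  by (induction k) (auto simp: delta_op_def shift_op_def)

definition fact_ratio :: "nat \<Rightarrow> nat \<Rightarrow> 'a::field_char_0" where
  "fact_ratio k j = (if k \<le> j then fact j / fact (j - k) else 0)"

lemma fact_ratio_Suc: "fact_ratio k m * of_nat (m - k) = fact_ratio (Suc k) m"
proof (cases "Suc k \<le> m")
  case True
  then obtain j where j: "m - k = Suc j" "m - Suc k = j"
    by (metis Suc_diff_Suc Suc_le_lessD diff_Suc_Suc)
  have "(fact (Suc j) :: 'a) = of_nat (Suc j) * fact j" by (rule fact_Suc)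
  then show ?thesis
    using True j by (simp add: fact_ratio_def divide_simps del: of_nat_Suc)
qed (simp add: fact_ratio_def)

context
  fixes D :: "'a::field_char_0 poly \<Rightarrow> 'a poly" and p :: "nat \<Rightarrow> 'a poly"
  assumes lin: "lin_op D" and basic: "basic_seq D p"
begin

lemma basic_seq_degree: "degree (p n) = n"
  using basic by (simp add: basic_seq_def)

lemma basic_seq_p0: "p 0 = 1"
  using basic by (simp add: basic_seq_def)

lemma basic_seq_poly_0: "poly (p j) 0 = (if j = 0 then 1 else 0)"
  using basic unfolding basic_seq_def by auto

lemma basic_seq_funpow: "(D ^^ k) (p m) = smult (fact_ratio k m) (p (m - k))"
proof (induction k)
  case (Suc k)
  have "(D ^^ Suc k) (p m) = smult (fact_ratio k m) (D (p (m - k)))"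
    using Suc by (simp add: lin_op_smult[OF lin])
  also have "\<dots> = smult (fact_ratio k m * of_nat (m - k)) (p (m - Suc k))"
    using basic by (simp add: basic_seq_def)
  finally show ?case by (simp only: fact_ratio_Suc)
qed (simp add: fact_ratio_def)

lemma basic_seq_funpow_sum:
  "(D ^^ k) (\<Sum>j\<le>n. smult (a j) (p j)) = (\<Sum>j\<le>n. smult (a j * fact_ratio k j) (p (j - k)))"
  by (simp add: lin_op_sum[OF lin_op_funpow[OF lin]] lin_op_smult[OF lin_op_funpow[OF lin]]
      basic_seq_funpow)

lemma basic_seq_spans:
  assumes "degree f \<le> n"
  obtains a where "f = (\<Sum>j\<le>n. smult (a j) (p j))"
  using assms
proof (induction n arbitrary: f thesis)
  case 0
  then have "f = smult (coeff f 0) (p 0)"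
    using basic by (metis basic_seq_def degree_0_id le_zero_eq smult_one)
  with 0 show ?case by simp
next
  case (Suc n)
  have lead: "coeff (p (Suc n)) (Suc n) \<noteq> 0"
    by (metis basic_seq_degree leading_coeff_0_iff nat.distinct(1) degree_0)
  define c where "c = coeff f (Suc n) / coeff (p (Suc n)) (Suc n)"
  have "degree (f - smult c (p (Suc n))) \<le> n"
  proof (rule degree_le, intro allI impI)
    fix i assume "n < i"
    then consider "i = Suc n" | "Suc n < i" by linarith
    then show "coeff (f - smult c (p (Suc n))) i = 0"
      by cases (use lead Suc.prems(2) in \<open>simp_all add: c_def coeff_eq_0 basic_seq_degree\<close>)
  qed
  then obtain a where "f - smult c (p (Suc n)) = (\<Sum>j\<le>n. smult (a j) (p j))"
    using Suc.IH by blast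
  then have "f = (\<Sum>j\<le>Suc n. smult ((a(Suc n := c)) j) (p j))"
    by (simp add: algebra_simps)
  then show ?case by (rule Suc.prems(1))
qed

lemma degree_funpow_le:
  assumes "degree g \<le> n"
  shows "degree ((D ^^ k) g) \<le> n - k"
proof -
  obtain a where a: "g = (\<Sum>j\<le>n. smult (a j) (p j))" using basic_seq_spans assms by blast
  show ?thesis
    unfolding a basic_seq_funpow_sum
    by (intro degree_sum_le) (auto intro: order.trans[OF degree_smult_le] simp: basic_seq_degree)
qed

lemma poly_funpow_basic_seq_sum_0:
  assumes "k \<le> n"
  shows "poly ((D ^^ k) (\<Sum>j\<le>n. smult (a j) (p j))) 0 = a k * fact k"
proof -
  have "poly ((D ^^ k) (\<Sum>j\<le>n. smult (a j) (p j))) 0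
      = (\<Sum>j\<le>n. if j = k then a k * fact k else 0)"
    unfolding basic_seq_funpow_sum poly_sum poly_smult
    by (rule sum.cong) (auto simp: basic_seq_poly_0 fact_ratio_def)
  then show ?thesis using assms by simp
qed

lemma funpow_basic_seq_sum_top:
  "(D ^^ m) (\<Sum>j\<le>m. smult (a j) (p j)) = [:a m * fact m:]"
proof -
  have "(D ^^ m) (\<Sum>j\<le>m. smult (a j) (p j)) = (\<Sum>j\<le>m. if j = m then [:a m * fact m:] else 0)"
    unfolding basic_seq_funpow_sum
    by (rule sum.cong) (auto simp: fact_ratio_def basic_seq_poly_0 basic_seq_p0)
  then show ?thesis by simp
qed

lemma basic_seq_taylor_0:
  assumes "degree g \<le> n"
  shows "g = (\<Sum>k\<le>n. smult (poly ((D ^^ k) g) 0 / fact k) (p k))"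
proof -
  obtain a where a: "g = (\<Sum>j\<le>n. smult (a j) (p j))" using basic_seq_spans assms by blast
  have "poly ((D ^^ k) g) 0 / fact k = a k" if "k \<le> n" for k
    unfolding a using poly_funpow_basic_seq_sum_0[OF that] by simp
  then show ?thesis by (subst a) (auto intro: sum.cong)
qed

lemma funpow_poly_eq_0_imp_eq_0:
  assumes "degree g \<le> m" and "\<And>k. k \<le> m \<Longrightarrow> poly ((D ^^ k) g) (w k) = 0"
  shows "g = 0"
  using assms
proof (induction m arbitrary: g)
  case 0
  then have g: "g = [:coeff g 0:]" by (metis degree_0_id le_zero_eq)
  have "poly g (w 0) = 0" using 0(2)[of 0] by simp
  then have "coeff g 0 = 0" by (subst (asm) g) simp
  with g show ?case by simp
next
  case (Suc m)
  obtain a where a: "g = (\<Sum>j\<le>Suc m. smult (a j) (p j))"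
    using basic_seq_spans Suc.prems(1) by blast
  have "a (Suc m) * fact (Suc m) = 0"
    using Suc.prems(2)[of "Suc m"] unfolding a funpow_basic_seq_sum_top by simp
  then have "a (Suc m) = 0" by (metis fact_nonzero mult_eq_0_iff)
  then have "g = (\<Sum>j\<le>m. smult (a j) (p j))" by (simp add: a)
  moreover have "degree (\<Sum>j\<le>m. smult (a j) (p j)) \<le> m"
    by (intro degree_sum_le) (auto intro: order.trans[OF degree_smult_le] simp: basic_seq_degree)
  ultimately show ?case using Suc.IH Suc.prems(2) by simp
qed

end

lemma delta_op_taylor:
  fixes D :: "'a::field_char_0 poly \<Rightarrow> 'a poly"
  assumes delta: "delta_op D" and basic: "basic_seq D p" and deg: "degree g \<le> n"
  shows "pcompose g [:\<xi>, 1:] = (\<Sum>k\<le>n. smult (poly ((D ^^ k) g) \<xi> / fact k) (p k))"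
proof -
  have lin: "lin_op D" using delta by (simp add: delta_op_def)
  have "degree (pcompose g [:\<xi>, 1:]) \<le> n" using deg by (simp add: degree_pcompose)
  from basic_seq_taylor_0[OF lin basic this] show ?thesis
    by (simp add: delta_op_funpow_shift[OF delta] poly_pcompose)
qed

lemma gon_basis_funpow:
  fixes D :: "'a::field_char_0 poly \<Rightarrow> 'a poly"
  assumes lin: "lin_op D" and basic: "basic_seq D p"
    and t: "gon_basis D z t" and s: "gon_basis D (\<lambda>i. z (i + k)) s" and "k \<le> n"
  shows "(D ^^ k) (t n) = smult (fact n / fact (n - k)) (s (n - k))"
proof -
  define g where "g = (D ^^ k) (t n) - smult (fact n / fact (n - k)) (s (n - k))"
  have "degree ((D ^^ k) (t n)) \<le> n - k"
    using t by (intro degree_funpow_le[OF lin basic]) (simp add: gon_basis_def)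
  moreover have "degree (s (n - k)) = n - k" using s by (simp add: gon_basis_def)
  ultimately have deg_g: "degree g \<le> n - k"
    unfolding g_def by (metis degree_diff_le degree_smult_le order.trans)
  have "poly ((D ^^ i) g) (z (i + k)) = 0" if "i \<le> n - k" for i
  proof -
    have "(D ^^ i) g = (D ^^ (i + k)) (t n) - smult (fact n / fact (n - k)) ((D ^^ i) (s (n - k)))"
      unfolding g_def using lin_op_funpow[OF lin, of i]
      by (simp add: lin_op_diff lin_op_smult funpow_add)
    then show ?thesis
      using t s that \<open>k \<le> n\<close> by (auto simp: gon_basis_def)
  qed
  then have "g = 0" by (rule funpow_poly_eq_0_imp_eq_0[OF lin basic deg_g])
  then show ?thesis by (simp add: g_def)
qed

theorem mainTheorem9:
  fixes D :: "'a::field_char_0 poly \<Rightarrow> 'a poly"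
    and p :: "nat \<Rightarrow> 'a poly"
    and z :: "nat \<Rightarrow> 'a"
    and T :: "nat \<Rightarrow> nat \<Rightarrow> 'a poly"
  assumes "delta_op D"
    and "basic_seq D p"
    and "\<And>j. gon_basis D (\<lambda>i. z (i + j)) (T j)"
  shows "(\<forall>\<xi> n. pcompose (T 0 n) [:\<xi>, 1:]
            = (\<Sum>i\<le>n. smult (of_nat (n choose i) * poly (T i (n - i)) \<xi>) (p i)))
       \<and> (\<forall>n. T 0 n = (\<Sum>i\<le>n. smult (of_nat (n choose i) * poly (T i (n - i)) 0) (p i)))"
proof -
  have lin: "lin_op D" using assms(1) by (simp add: delta_op_def)
  have T0: "gon_basis D z (T 0)" using assms(3)[of 0] by simp
  have shifted: "pcompose (T 0 n) [:\<xi>, 1:]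
      = (\<Sum>i\<le>n. smult (of_nat (n choose i) * poly (T i (n - i)) \<xi>) (p i))" for \<xi> n
  proof -
    have "poly ((D ^^ i) (T 0 n)) \<xi> / fact i = of_nat (n choose i) * poly (T i (n - i)) \<xi>"
      if "i \<le> n" for i
      using gon_basis_funpow[OF lin assms(2) T0 assms(3)[of i] that]
      by (simp add: binomial_fact[OF that] field_simps)
    moreover have "degree (T 0 n) \<le> n" using T0 by (simp add: gon_basis_def)
    ultimately show ?thesis
      by (simp add: delta_op_taylor[OF assms(1,2)])
  qed
  then have "T 0 n = (\<Sum>i\<le>n. smult (of_nat (n choose i) * poly (T i (n - i)) 0) (p i))" for n
    by (metis pcompose_idR)
  with shifted show ?thesis by blast
qed

end
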